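(* For all integers $n\ge 1$ and $q\ge 3$ there exists a quasi-complementary Hamming metric Gray code of $q$-ary $n$-tuples.
   Context: The Hamming distance between two words is the number of coordinates in which they differ. A quasi-complementary Hamming metric Gray code of $q$-ary $n$-tuples is an ordering $G(0),\ldots,G(q^n-1)$ of all words of $\mathbb{Z}_q^n$ such that consecutive words $G(i),G(i+1)$ ($0\le i<q^n-1$) have Hamming distance $1$ and $G((i+q^{n-1})\bmod q^n)=G(i)+(1,1,\ldots,1)$ for all $i$, with addition in $\mathbb{Z}_q^n$. *)

theory Defs
  imports Main
begin

text \<open>Words of Z_q^n are represented as functions nat => nat with entries in {0..<q}
  on the coordinates {0..<n} and equal to 0 outside.\<close>

definition words :: "nat \<Rightarrow> nat \<Rightarrow> (nat \<Rightarrow> nat) set" where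
  "words q n = {w. (\<forall>i<n. w i < q) \<and> (\<forall>i\<ge>n. w i = 0)}"

definition hamming_dist :: "nat \<Rightarrow> (nat \<Rightarrow> nat) \<Rightarrow> (nat \<Rightarrow> nat) \<Rightarrow> nat" where
  "hamming_dist n u v = card {i. i < n \<and> u i \<noteq> v i}"

definition add_ones :: "nat \<Rightarrow> nat \<Rightarrow> (nat \<Rightarrow> nat) \<Rightarrow> (nat \<Rightarrow> nat)" where
  "add_ones q n w = (\<lambda>i. if i < n then (w i + 1) mod q else 0)"

definition quasi_compl_gray_code :: "nat \<Rightarrow> nat \<Rightarrow> (nat \<Rightarrow> (nat \<Rightarrow> nat)) \<Rightarrow> bool" where
  "quasi_compl_gray_code q n G \<longleftrightarrow>
     bij_betw G {..<q ^ n} (words q n) \<and>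
     (\<forall>i. i + 1 < q ^ n \<longrightarrow> hamming_dist n (G i) (G (i + 1)) = 1) \<and>
     (\<forall>i<q ^ n. G ((i + q ^ (n - 1)) mod q ^ n) = add_ones q n (G i))"

end

theory Submission
  imports Defs "HOL-Library.FuncSet" "HOL-Number_Theory.Cong"
begin

(* For q \<ge> 3 there is a Hamming Gray path through Z_q^m from the zero word 0 to the all-ones
   word 1.  Inductively, such a path H is extended by a last coordinate which, while the first
   m coordinates rest at the j-th word of H, runs through a permutation of Z_q; the permutations
   are chained so that consecutive blocks meet in the same digit and the last digit ends at 1.

   Given such a path H, list the q copies H + c 1 (c = 0, ..., q - 1), each extended by the
   digit c.  Since H(q^m - 1) + c 1 = H(0) + (c + 1) 1, this is a Gray code of Z_q^(m+1), and
   moving q^m steps ahead replaces c by c + 1 mod q, i.e. adds the all-ones word. *)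

definition ones :: "nat \<Rightarrow> nat \<Rightarrow> nat" where
  "ones m = (\<lambda>i. if i < m then 1 else 0)"

definition translate :: "nat \<Rightarrow> nat \<Rightarrow> nat \<Rightarrow> (nat \<Rightarrow> nat) \<Rightarrow> nat \<Rightarrow> nat" where
  "translate q n c w = (\<lambda>i. if i < n then (w i + c) mod q else 0)"

definition gray_path :: "nat \<Rightarrow> nat \<Rightarrow> (nat \<Rightarrow> nat \<Rightarrow> nat) \<Rightarrow> bool" where
  "gray_path q n H \<longleftrightarrow> bij_betw H {..<q ^ n} (words q n) \<and>
     (\<forall>i. i + 1 < q ^ n \<longrightarrow> hamming_dist n (H i) (H (i + 1)) = 1)"

lemma quasi_compl_gray_code_iff:
  "quasi_compl_gray_code q n G \<longleftrightarrow> gray_path q n G \<and>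
     (\<forall>i<q ^ n. G ((i + q ^ (n - 1)) mod q ^ n) = add_ones q n (G i))"
  unfolding quasi_compl_gray_code_def gray_path_def by blast

lemma bij_betw_PiE_words:
  "bij_betw (\<lambda>f i. if i < n then f i else 0) ({..<n} \<rightarrow>\<^sub>E {..<q}) (words q n)"
  by (rule bij_betw_byWitness[where f' = "\<lambda>w. restrict w {..<n}"])
    (auto simp: words_def fun_eq_iff PiE_def extensional_def)

lemma finite_words: "finite (words q n)"
  using bij_betw_finite[OF bij_betw_PiE_words] by (simp add: finite_PiE)

lemma card_words: "card (words q n) = q ^ n"
  using bij_betw_same_card[OF bij_betw_PiE_words] by (simp add: card_PiE)

lemma gray_pathI:
  assumes "inj_on H {..<q ^ n}"
    and "\<And>i. i < q ^ n \<Longrightarrow> H i \<in> words q n"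
    and "\<And>i. i + 1 < q ^ n \<Longrightarrow> hamming_dist n (H i) (H (i + 1)) = 1"
  shows "gray_path q n H"
proof -
  have "H ` {..<q ^ n} = words q n"
    using assms(1,2) card_image[OF assms(1)]
    by (intro card_subset_eq finite_words) (auto simp: card_words)
  then show ?thesis
    unfolding gray_path_def bij_betw_def using assms(1,3) by blast
qed

lemma words_fun_upd: "w \<in> words q m \<Longrightarrow> a < q \<Longrightarrow> w(m := a) \<in> words q (Suc m)"
  by (auto simp: words_def less_Suc_eq)

lemma hamming_dist_fun_upd_same:
  "hamming_dist (Suc m) (u(m := a)) (v(m := a)) = hamming_dist m u v"
  unfolding hamming_dist_def by (rule arg_cong[where f = card]) (auto simp: less_Suc_eq)

lemma hamming_dist_fun_upd_neq:
  assumes "a \<noteq> b"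
  shows "hamming_dist (Suc m) (u(m := a)) (u(m := b)) = 1"
proof -
  have "{i. i < Suc m \<and> (u(m := a)) i \<noteq> (u(m := b)) i} = {m}"
    using assms by auto
  then show ?thesis
    unfolding hamming_dist_def by simp
qed

lemma add_mod_right_cancel_less:
  fixes a b c q :: nat
  assumes "a < q" and "b < q"
  shows "(a + c) mod q = (b + c) mod q \<longleftrightarrow> a = b"
  using cong_add_rcancel_nat[of a c b q] assms by (simp add: cong_def)

lemma translate_in_words: "0 < q \<Longrightarrow> translate q n c w \<in> words q n"
  by (simp add: translate_def words_def)

lemma translate_inj:
  assumes "u \<in> words q n" and "v \<in> words q n" and "translate q n c u = translate q n c v"
  shows "u = v"
proof
  fix i
  show "u i = v i"
  proof (cases "i < n")
    case True
    have "(u i + c) mod q = (v i + c) mod q"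
      using fun_cong[OF assms(3), of i] True by (simp add: translate_def)
    then show ?thesis
      using assms(1,2) True by (simp add: words_def add_mod_right_cancel_less)
  next
    case False
    then show ?thesis
      using assms(1,2) by (simp add: words_def)
  qed
qed

lemma hamming_dist_translate:
  assumes "u \<in> words q n" and "v \<in> words q n"
  shows "hamming_dist n (translate q n c u) (translate q n c v) = hamming_dist n u v"
  unfolding hamming_dist_def using assms
  by (intro arg_cong[where f = card]) (auto simp: translate_def words_def add_mod_right_cancel_less)

lemma translate_Suc:
  "w m = 0 \<Longrightarrow> translate q (Suc m) c w = (translate q m c w)(m := c mod q)"
  by (auto simp: translate_def fun_eq_iff less_Suc_eq)

lemma translate_mod: "translate q n (c mod q) w = translate q n c w"
  by (simp add: translate_def fun_eq_iff mod_simps)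

lemma add_ones_translate: "add_ones q n (translate q n c w) = translate q n (Suc c) w"
  by (simp add: add_ones_def translate_def fun_eq_iff mod_Suc_eq)

lemma translate_ones: "translate q m c (ones m) = translate q m (Suc c) (\<lambda>_. 0)"
  by (simp add: translate_def ones_def fun_eq_iff)

definition tail_cycle :: "nat \<Rightarrow> nat \<Rightarrow> nat \<Rightarrow> nat" where
  "tail_cycle q a t = (if t < a then t else if t = q - 1 then a else t + 1)"

lemma bij_betw_tail_cycle:
  assumes "a < q"
  shows "bij_betw (tail_cycle q a) {..<q} {..<q}"
proof -
  have "inj_on (tail_cycle q a) {..<q}"
    by (auto simp: inj_on_def tail_cycle_def split: if_splits)
  moreover have "tail_cycle q a ` {..<q} \<subseteq> {..<q}"
    using assms by (auto simp: tail_cycle_def)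
  ultimately show ?thesis
    by (simp add: bij_betw_def endo_inj_surj)
qed

lemma bij_betw_add_mod:
  assumes "0 < (q::nat)"
  shows "bij_betw (\<lambda>t. (t + c) mod q) {..<q} {..<q}"
proof -
  have "inj_on (\<lambda>t. (t + c) mod q) {..<q}"
    by (auto simp: inj_on_def add_mod_right_cancel_less)
  moreover have "(\<lambda>t. (t + c) mod q) ` {..<q} \<subseteq> {..<q}"
    using assms by auto
  ultimately show ?thesis
    by (simp add: bij_betw_def endo_inj_surj)
qed

lemma gray_path_extend:
  assumes H: "gray_path q m H"
    and Y_bij: "\<And>j. j < q ^ m \<Longrightarrow> bij_betw (Y j) {..<q} {..<q}"
    and Y_link: "\<And>j. Suc j < q ^ m \<Longrightarrow> Y j (q - 1) = Y (Suc j) 0"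
  shows "gray_path q (Suc m) (\<lambda>i. (H (i div q))(m := Y (i div q) (i mod q)))"
    (is "gray_path _ _ ?H'")
proof (rule gray_pathI)
  have H_bij: "bij_betw H {..<q ^ m} (words q m)" and
    H_adj: "\<And>j. j + 1 < q ^ m \<Longrightarrow> hamming_dist m (H j) (H (j + 1)) = 1"
    using H by (auto simp: gray_path_def)
  have div_less: "i div q < q ^ m" if "i < q ^ Suc m" for i
    using that by (simp add: less_mult_imp_div_less mult.commute)
  have mod_less: "i mod q < q" if "i < q ^ Suc m" for i
    using that by (cases q) auto
  have H_words: "H (i div q) \<in> words q m" if "i < q ^ Suc m" for i
    using bij_betwE[OF H_bij] div_less[OF that] by blast
  show "?H' i \<in> words q (Suc m)" if "i < q ^ Suc m" for i
  proof (rule words_fun_upd)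
    show "H (i div q) \<in> words q m"
      using H_words[OF that] .
    show "Y (i div q) (i mod q) < q"
      using bij_betwE[OF Y_bij[OF div_less[OF that]]] mod_less[OF that] by blast
  qed
  show "inj_on ?H' {..<q ^ Suc m}"
  proof (rule inj_onI)
    fix i i' assume "i \<in> {..<q ^ Suc m}" and "i' \<in> {..<q ^ Suc m}" and eq: "?H' i = ?H' i'"
    then have i: "i < q ^ Suc m" and i': "i' < q ^ Suc m"
      by simp_all
    have "H (i div q) = (?H' i)(m := 0)" and "H (i' div q) = (?H' i')(m := 0)"
      using H_words i i' by (auto simp: words_def fun_eq_iff)
    then have div_eq: "i div q = i' div q"
      using eq bij_betw_imp_inj_on[OF H_bij] div_less i i' by (simp add: inj_on_eq_iff)
    moreover have "i mod q = i' mod q"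
      using inj_onD[OF bij_betw_imp_inj_on[OF Y_bij[OF div_less[OF i']]]] fun_cong[OF eq, of m]
        div_eq mod_less i i'
      by simp
    ultimately show "i = i'"
      by (metis div_mult_mod_eq)
  qed
  show "hamming_dist (Suc m) (?H' i) (?H' (i + 1)) = 1" if "i + 1 < q ^ Suc m" for i
  proof (cases "Suc (i mod q) = q")
    case False
    then have "(i + 1) div q = i div q" and "(i + 1) mod q = Suc (i mod q)"
      by (simp_all add: div_Suc mod_Suc)
    moreover have "Y (i div q) (i mod q) \<noteq> Y (i div q) (Suc (i mod q))"
    proof -
      have i: "i < q ^ Suc m" and "Suc (i mod q) < q"
        using that False mod_less[of i] by (simp_all add: less_Suc_eq)
      then show ?thesis
        using inj_on_eq_iff[OF bij_betw_imp_inj_on[OF Y_bij[OF div_less[OF i]]]] by simp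
    qed
    ultimately show ?thesis
      by (simp add: hamming_dist_fun_upd_neq)
  next
    case True
    then have "(i + 1) div q = Suc (i div q)" and "(i + 1) mod q = 0" and "i mod q = q - 1"
      by (simp_all add: div_Suc mod_Suc)
    moreover have "Suc (i div q) < q ^ m"
      using div_less[OF that] \<open>(i + 1) div q = Suc (i div q)\<close> by simp
    ultimately show ?thesis
      using H_adj Y_link by (simp add: hamming_dist_fun_upd_same)
  qed
qed

lemma chained_digit_permutations:
  assumes "3 \<le> q"
  shows "\<exists>Y. (\<forall>j. bij_betw (Y j) {..<q} {..<q}) \<and>
    (\<forall>j. Suc j < q ^ m \<longrightarrow> Y j (q - 1) = Y (Suc j) 0) \<and>
    Y 0 0 = 0 \<and> Y (q ^ m - 1) (q - 1) = 1"
proof -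
  define M where "M = q ^ m"
  \<comment> \<open>Block j moves the last digit from j to j + 1, except that the final block moves it by 2
    when q divides M, so that it ends at M + 1 = 1 (mod q).\<close>
  define Y where "Y j t = (tail_cycle q (if Suc j = M \<and> 0 < m then 2 else 1) t + j) mod q" for j t
  have Y_first: "Y j 0 = j mod q" for j
    by (simp add: Y_def tail_cycle_def)
  have Y_last: "Y j (q - 1) = ((if Suc j = M \<and> 0 < m then 2 else 1) + j) mod q" for j
    using assms by (simp add: Y_def tail_cycle_def)
  have Y_bij: "bij_betw (Y j) {..<q} {..<q}" for j
    unfolding Y_def using assms
    by (intro bij_betw_trans[OF bij_betw_tail_cycle bij_betw_add_mod, unfolded comp_def]) auto
  have Y_link: "Y j (q - 1) = Y (Suc j) 0" if "Suc j < M" for j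
    using that Y_last[of j] by (simp add: Y_first)
  have Y_end: "Y (M - 1) (q - 1) = 1"
  proof (cases m)
    case 0
    then show ?thesis
      using assms Y_last[of "M - 1"] by (simp add: M_def)
  next
    case (Suc k)
    then have "(M + 1) mod q = 1"
      using assms by (simp add: M_def mod_Suc)
    then show ?thesis
      using Suc assms Y_last[of "M - 1"] by (simp add: M_def)
  qed
  show ?thesis
    using Y_bij Y_link Y_first[of 0] Y_end unfolding M_def by (intro exI[of _ Y]) simp
qed

lemma gray_path_zero_to_ones:
  assumes "3 \<le> q"
  shows "\<exists>H. gray_path q m H \<and> H 0 = (\<lambda>_. 0) \<and> H (q ^ m - 1) = ones m"
proof (induction m)
  case 0
  have "words q 0 = {\<lambda>_. 0}"
    by (auto simp: words_def)
  then have "gray_path q 0 (\<lambda>_ _. 0)"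
    by (simp add: gray_path_def bij_betw_def lessThan_Suc)
  then show ?case
    by (auto simp: ones_def)
next
  case (Suc m)
  then obtain H where H: "gray_path q m H" and H_first: "H 0 = (\<lambda>_. 0)"
    and H_last: "H (q ^ m - 1) = ones m"
    by blast
  obtain Y where Y_bij: "\<And>j. bij_betw (Y j) {..<q} {..<q}"
    and Y_link: "\<And>j. Suc j < q ^ m \<Longrightarrow> Y j (q - 1) = Y (Suc j) 0"
    and Y_first: "Y 0 0 = 0" and Y_last: "Y (q ^ m - 1) (q - 1) = 1"
    using chained_digit_permutations[OF assms, of m] by auto
  define H' where "H' i = (H (i div q))(m := Y (i div q) (i mod q))" for i
  have "gray_path q (Suc m) H'"
    unfolding H'_def by (rule gray_path_extend[OF H]) (use Y_bij Y_link in auto)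
  moreover have "H' 0 = (\<lambda>_. 0)"
    by (simp add: H'_def H_first Y_first fun_eq_iff)
  moreover have "H' (q ^ Suc m - 1) = ones (Suc m)"
  proof -
    \<comment> \<open>The opaque r keeps simp from rewriting (q ^ m - 1) * q + (q - 1) into a subtraction.\<close>
    obtain r where r: "r = q - 1" "r < q"
      using assms by simp
    then have "q ^ Suc m - 1 = (q ^ m - 1) * q + r"
      using assms by (simp add: algebra_simps)
    then have "(q ^ Suc m - 1) div q = q ^ m - 1" and "(q ^ Suc m - 1) mod q = q - 1"
      unfolding r(1)[symmetric] using r(2) by simp_all
    then show ?thesis
      using Y_last H_last by (auto simp: H'_def ones_def fun_eq_iff)
  qed
  ultimately show ?case
    by blast
qed

definition translate_blocks :: "nat \<Rightarrow> nat \<Rightarrow> (nat \<Rightarrow> nat \<Rightarrow> nat) \<Rightarrow> nat \<Rightarrow> nat \<Rightarrow> nat" where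
  "translate_blocks q m H i = translate q (Suc m) (i div q ^ m) (H (i mod q ^ m))"

lemma translate_blocks_mod:
  assumes "0 < q"
  shows "translate_blocks q m H (i mod q ^ Suc m) = translate_blocks q m H i"
proof -
  have "i mod q ^ Suc m = q ^ m * (i div q ^ m mod q) + i mod q ^ m"
    using mod_mult2_eq[of i "q ^ m" q] by (simp add: mult.commute)
  then have "i mod q ^ Suc m div q ^ m = i div q ^ m mod q"
    and "i mod q ^ Suc m mod q ^ m = i mod q ^ m"
    using assms by simp_all
  then show ?thesis
    by (simp add: translate_blocks_def translate_mod)
qed

lemma translate_blocks_add_ones:
  assumes "0 < q"
  shows "translate_blocks q m H ((i + q ^ m) mod q ^ Suc m) =
    add_ones q (Suc m) (translate_blocks q m H i)"
proof -
  have "translate_blocks q m H ((i + q ^ m) mod q ^ Suc m) = translate_blocks q m H (i + q ^ m)"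
    using translate_blocks_mod[OF assms] .
  also have "\<dots> = add_ones q (Suc m) (translate_blocks q m H i)"
    using assms by (simp add: translate_blocks_def add_ones_translate div_add_self2)
  finally show ?thesis .
qed

lemma translate_blocks_fun_upd:
  assumes "H (i mod q ^ m) \<in> words q m"
  shows "translate_blocks q m H i =
    (translate q m (i div q ^ m) (H (i mod q ^ m)))(m := i div q ^ m mod q)"
  using assms by (simp add: translate_blocks_def translate_Suc words_def)

lemma gray_path_translate_blocks:
  assumes "0 < q" and H: "gray_path q m H"
    and H_first: "H 0 = (\<lambda>_. 0)" and H_last: "H (q ^ m - 1) = ones m"
  shows "gray_path q (Suc m) (translate_blocks q m H)"
proof (rule gray_pathI)
  define M where "M = q ^ m"
  have H_bij: "bij_betw H {..<M} (words q m)" and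
    H_adj: "\<And>j. j + 1 < M \<Longrightarrow> hamming_dist m (H j) (H (j + 1)) = 1"
    using H by (auto simp: gray_path_def M_def)
  have M_pos: "0 < M"
    using assms(1) by (simp add: M_def)
  have H_words: "j < M \<Longrightarrow> H j \<in> words q m" for j
    using bij_betwE[OF H_bij] by simp
  have div_less: "i div M < q" if "i < q ^ Suc m" for i
    using that by (simp add: M_def less_mult_imp_div_less)
  have G: "translate_blocks q m H i = (translate q m (i div M) (H (i mod M)))(m := i div M mod q)"
    for i
    using translate_blocks_fun_upd H_words M_pos by (simp add: M_def)
  show "translate_blocks q m H i \<in> words q (Suc m)" for i
    using translate_in_words[OF assms(1)] by (simp add: translate_blocks_def)
  show "inj_on (translate_blocks q m H) {..<q ^ Suc m}"
  proof (rule inj_onI)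
    fix i i' assume "i \<in> {..<q ^ Suc m}" and "i' \<in> {..<q ^ Suc m}"
      and eq: "translate_blocks q m H i = translate_blocks q m H i'"
    then have "i < q ^ Suc m" and "i' < q ^ Suc m"
      by simp_all
    moreover have "i div M mod q = i' div M mod q"
      using fun_cong[OF eq, of m] by (simp add: G)
    ultimately have div_eq: "i div M = i' div M"
      using div_less by simp
    have "(translate_blocks q m H k)(m := 0) = translate q m (k div M) (H (k mod M))" for k
      by (simp add: G translate_def fun_eq_iff)
    then have "translate q m (i div M) (H (i mod M)) = translate q m (i div M) (H (i' mod M))"
      using eq div_eq by metis
    then have "H (i mod M) = H (i' mod M)"
      using translate_inj H_words mod_less_divisor[OF M_pos] by meson
    then have "i mod M = i' mod M"
      using bij_betw_imp_inj_on[OF H_bij] M_pos by (simp add: inj_on_eq_iff)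
    with div_eq show "i = i'"
      by (metis div_mult_mod_eq)
  qed
  show "hamming_dist (Suc m) (translate_blocks q m H i) (translate_blocks q m H (i + 1)) = 1"
    if "i + 1 < q ^ Suc m" for i
  proof (cases "Suc (i mod M) = M")
    case False
    then have "(i + 1) div M = i div M" and "(i + 1) mod M = i mod M + 1"
      by (simp_all add: div_Suc mod_Suc)
    moreover have "i mod M + 1 < M"
      using False mod_less_divisor[OF M_pos, of i] by linarith
    ultimately show ?thesis
      using H_adj H_words M_pos
      by (simp add: G hamming_dist_fun_upd_same hamming_dist_translate[of _ q m])
  next
    case True
    then have "(i + 1) div M = Suc (i div M)" and "(i + 1) mod M = 0" and "i mod M = M - 1"
      by (simp_all add: div_Suc mod_Suc)
    moreover have "Suc (i div M) < q"
      using div_less[OF that] \<open>(i + 1) div M = Suc (i div M)\<close> by simp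
    ultimately show ?thesis
      using H_first H_last
      by (simp add: G translate_ones hamming_dist_fun_upd_neq M_def)
  qed
qed

theorem corollary3:
  fixes n q :: nat
  assumes "n \<ge> 1" and "q \<ge> 3"
  shows "\<exists>G. quasi_compl_gray_code q n G"
proof -
  obtain m where n: "n = Suc m"
    using assms(1) by (cases n) auto
  obtain H where "gray_path q m H" and "H 0 = (\<lambda>_. 0)" and "H (q ^ m - 1) = ones m"
    using gray_path_zero_to_ones assms(2) by blast
  then have "quasi_compl_gray_code q n (translate_blocks q m H)"
    using gray_path_translate_blocks translate_blocks_add_ones assms(2)
    by (simp add: quasi_compl_gray_code_iff n)
  then show ?thesis
    by blast
qed

end
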